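(* Let $G=(Q,A,\delta)$ be an MDP, $q\in Q$, reals $a<0<b$ and $a\le\eta\le0$, and let $v$ be an $[a,b]$-valuation that is $\eta$-bounded with respect to some $\mathrm{NZ}\subseteq Q\times A$. Then for every $n\ge1$, every $t>0$ and every strategy $\sigma$, $$\mathbb P^\sigma_q\big[G,\{\rho: s^n_v(\rho)\ge n\eta+t\}\cap\{\rho: c^n_v(\rho)=n\}\big]\le\exp\Big(-\frac{2t^2}{n(b-a)^2}\Big).$$
   Context: An MDP $G=(Q,A,\delta)$ has finite non-empty $Q,A$ and $\delta:Q\times A\to\mathcal D(Q)$; strategies are maps $\sigma:Q\cdot(A\cdot Q)^*\to\mathcal D(A)$, and $\mathbb P^\sigma_q[G,\cdot]$ is the induced probability measure on infinite runs $(Q\cdot A)^\omega$ from $q$ (cylinder of $q_0(a_1,q_1)\cdots(a_n,q_n)$ has probability $[q_0=q]\prod_i\sigma(\text{prefix up to }q_{i-1})(a_i)\delta(q_{i-1},a_i)(q_i)$). An $[a,b]$-valuation is a function $v:Q\cdot(A\cdot Q)^*\to[a,b]$. It is $\eta$-bounded w.r.t. $\mathrm{NZ}\subseteq Q\times A$ if for every finite run $\rho$ with last state $\mathrm{last}(\rho)$ and every action $\alpha$: if $(\mathrm{last}(\rho),\alpha)\notin\mathrm{NZ}$ then $v(\rho\cdot(\alpha,q'))=0$ for all $q'\in Q$; if $(\mathrm{last}(\rho),\alpha)\in\mathrm{NZ}$ then $\sum_{q'}\delta(\mathrm{last}(\rho),\alpha)(q')\,v(\rho\cdot(\alpha,q'))\le\eta$.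 For an infinite run $\rho=(q_0,a_0)(q_1,a_1)\cdots$, let $\mathrm{IndNZ}(\rho)=\{i:(q_i,a_i)\in\mathrm{NZ}\}$ and $\mathrm{IndNZ}^n(\rho)$ its $\min(n,|\mathrm{IndNZ}(\rho)|)$ smallest elements; $s^n_v(\rho):=\sum_{i\in\mathrm{IndNZ}^n(\rho)}v(q_0(a_0,q_1)\cdots(a_i,q_{i+1}))$ and $c^n_v(\rho):=|\mathrm{IndNZ}^n(\rho)|$. *)

theory Defs
  imports "HOL-Probability.Probability"
begin

(* MDP G = (Q, A, delta): Q = 'q, A = 'a (finite nonempty types), delta :: 'q => 'a => 'q pmf.
   Finite run q0 (a1,q1) ... (an,qn) is represented as (q0, [(a1,q1),...,(an,qn)]).
   Infinite run (q0,a0)(q1,a1)... is represented as rho :: nat => 'q * 'a, rho i = (q_i, a_i). *)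

type_synonym ('q,'a) frun = "'q \<times> ('a \<times> 'q) list"
type_synonym ('q,'a) irun = "nat \<Rightarrow> 'q \<times> 'a"

definition last_st :: "('q,'a) frun \<Rightarrow> 'q" where
  "last_st h = (if snd h = [] then fst h else snd (last (snd h)))"

definition ext_run :: "('q,'a) frun \<Rightarrow> 'a \<Rightarrow> 'q \<Rightarrow> ('q,'a) frun" where
  "ext_run h \<alpha> q' = (fst h, snd h @ [(\<alpha>, q')])"

definition cyl :: "('q,'a) frun \<Rightarrow> ('q,'a) irun set" where
  "cyl h = {\<rho>. fst (\<rho> 0) = fst h \<and>
     (\<forall>i < length (snd h). snd (\<rho> i) = fst (snd h ! i) \<and> fst (\<rho> (Suc i)) = snd (snd h ! i))}"

definition cyl_prob :: "('q \<Rightarrow> 'a \<Rightarrow> 'q pmf) \<Rightarrow> (('q,'a) frun \<Rightarrow> 'a pmf) \<Rightarrow> 'q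
    \<Rightarrow> ('q,'a) frun \<Rightarrow> real" where
  "cyl_prob \<delta> \<sigma> q h = (if fst h = q then 1 else 0) *
     (\<Prod>i < length (snd h).
        pmf (\<sigma> (fst h, take i (snd h))) (fst (snd h ! i)) *
        pmf (\<delta> (last_st (fst h, take i (snd h))) (fst (snd h ! i))) (snd (snd h ! i)))"

abbreviation runs_space :: "('q,'a) irun measure" where
  "runs_space \<equiv> PiM UNIV (\<lambda>_::nat. count_space (UNIV :: ('q \<times> 'a) set))"

(* M is the measure P^sigma_q[G, .]: the (unique) probability measure on runs_space
   assigning to every cylinder the prescribed probability *)
definition is_run_measure :: "('q \<Rightarrow> 'a \<Rightarrow> 'q pmf) \<Rightarrow> (('q,'a) frun \<Rightarrow> 'a pmf) \<Rightarrow> 'q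
    \<Rightarrow> ('q,'a) irun measure \<Rightarrow> bool" where
  "is_run_measure \<delta> \<sigma> q M \<longleftrightarrow> prob_space M \<and> sets M = sets runs_space \<and>
     (\<forall>h. measure M (cyl h) = cyl_prob \<delta> \<sigma> q h)"

definition is_valuation :: "real \<Rightarrow> real \<Rightarrow> (('q,'a) frun \<Rightarrow> real) \<Rightarrow> bool" where
  "is_valuation a b v \<longleftrightarrow> (\<forall>h. a \<le> v h \<and> v h \<le> b)"

definition eta_bounded :: "('q::finite \<Rightarrow> 'a \<Rightarrow> 'q pmf) \<Rightarrow> real \<Rightarrow> ('q \<times> 'a) set
    \<Rightarrow> (('q,'a) frun \<Rightarrow> real) \<Rightarrow> bool" where
  "eta_bounded \<delta> \<eta> NZ v \<longleftrightarrow> (\<forall>h \<alpha>.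
     ((last_st h, \<alpha>) \<notin> NZ \<longrightarrow> (\<forall>q'. v (ext_run h \<alpha> q') = 0)) \<and>
     ((last_st h, \<alpha>) \<in> NZ \<longrightarrow> (\<Sum>q'\<in>UNIV. pmf (\<delta> (last_st h) \<alpha>) q' * v (ext_run h \<alpha> q')) \<le> \<eta>))"

definition IndNZ :: "('q \<times> 'a) set \<Rightarrow> ('q,'a) irun \<Rightarrow> nat set" where
  "IndNZ NZ \<rho> = {i. \<rho> i \<in> NZ}"

(* the min(n, |IndNZ|) smallest elements of IndNZ *)
definition IndNZn :: "('q \<times> 'a) set \<Rightarrow> nat \<Rightarrow> ('q,'a) irun \<Rightarrow> nat set" where
  "IndNZn NZ n \<rho> = {i \<in> IndNZ NZ \<rho>. card {j \<in> IndNZ NZ \<rho>. j < i} < n}"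

(* prefix q0 (a0,q1) ... (a_i,q_{i+1}) of an infinite run *)
definition prefix_run :: "('q,'a) irun \<Rightarrow> nat \<Rightarrow> ('q,'a) frun" where
  "prefix_run \<rho> i = (fst (\<rho> 0), map (\<lambda>j. (snd (\<rho> j), fst (\<rho> (Suc j)))) [0..<Suc i])"

definition s_n :: "('q \<times> 'a) set \<Rightarrow> (('q,'a) frun \<Rightarrow> real) \<Rightarrow> nat \<Rightarrow> ('q,'a) irun \<Rightarrow> real" where
  "s_n NZ v n \<rho> = (\<Sum>i\<in>IndNZn NZ n \<rho>. v (prefix_run \<rho> i))"

definition c_n :: "('q \<times> 'a) set \<Rightarrow> nat \<Rightarrow> ('q,'a) irun \<Rightarrow> nat" where
  "c_n NZ n \<rho> = card (IndNZn NZ n \<rho>)"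

end

theory Submission imports Defs begin

(* Fix l > 0 and put \<kappa> = l^2 (b - a)^2 / 8. Along a run, the weight exp (l (S - \<eta> C) - \<kappa> C),
   where C counts the first n NZ-steps seen so far and S sums the values at them, is a
   supermartingale under every strategy: at a counted step the next value lies in [a, b] and has
   conditional mean at most \<eta>, so by Hoeffding's lemma the weight does not grow in expectation;
   at every other step it is unchanged. Hence its expectation after K steps is at most 1, and by
   Markov's inequality the probability that the first K steps already contain n counted steps
   with sum at least n \<eta> + t is at most exp (-(l t - \<kappa> n)). These events increase with K and
   exhaust the event of the theorem; the choice l = 4 t / (n (b - a)^2) yields the bound. *)

(* Finite-run counterparts of IndNZn, s_n and c_n; step i of h takes action fst (snd h ! i) in the
   state reached after i steps. *)

definition nz_step :: "('q \<times> 'a) set \<Rightarrow> ('q,'a) frun \<Rightarrow> nat \<Rightarrow> bool" where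
  "nz_step NZ h i \<longleftrightarrow> (last_st (fst h, take i (snd h)), fst (snd h ! i)) \<in> NZ"

definition IndNZn_fin :: "('q \<times> 'a) set \<Rightarrow> nat \<Rightarrow> ('q,'a) frun \<Rightarrow> nat set" where
  "IndNZn_fin NZ n h =
     {i. i < length (snd h) \<and> nz_step NZ h i \<and> card {j. j < i \<and> nz_step NZ h j} < n}"

definition s_n_fin :: "('q \<times> 'a) set \<Rightarrow> (('q,'a) frun \<Rightarrow> real) \<Rightarrow> nat \<Rightarrow> ('q,'a) frun \<Rightarrow> real" where
  "s_n_fin NZ v n h = (\<Sum>i\<in>IndNZn_fin NZ n h. v (fst h, take (Suc i) (snd h)))"

definition c_n_fin :: "('q \<times> 'a) set \<Rightarrow> nat \<Rightarrow> ('q,'a) frun \<Rightarrow> nat" where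
  "c_n_fin NZ n h = card (IndNZn_fin NZ n h)"

definition counts_next :: "('q \<times> 'a) set \<Rightarrow> nat \<Rightarrow> ('q,'a) frun \<Rightarrow> 'a \<Rightarrow> bool" where
  "counts_next NZ n h \<alpha> \<longleftrightarrow>
     (last_st h, \<alpha>) \<in> NZ \<and> card {j. j < length (snd h) \<and> nz_step NZ h j} < n"

lemma nz_step_ext_run: "i < length (snd h) \<Longrightarrow> nz_step NZ (ext_run h \<alpha> q') i = nz_step NZ h i"
  by (simp add: nz_step_def ext_run_def nth_append)

lemma nz_step_ext_run_length:
  "nz_step NZ (ext_run h \<alpha> q') (length (snd h)) \<longleftrightarrow> (last_st h, \<alpha>) \<in> NZ"
  by (simp add: nz_step_def ext_run_def)

lemma IndNZn_fin_ext_run: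
  "IndNZn_fin NZ n (ext_run h \<alpha> q') =
     IndNZn_fin NZ n h \<union> (if counts_next NZ n h \<alpha> then {length (snd h)} else {})"
proof -
  have count_eq: "{j. j < i \<and> nz_step NZ (ext_run h \<alpha> q') j} = {j. j < i \<and> nz_step NZ h j}"
    if "i \<le> length (snd h)" for i
    using that nz_step_ext_run[of _ h NZ \<alpha> q'] by auto
  have "i < length (snd (ext_run h \<alpha> q')) \<longleftrightarrow> i < length (snd h) \<or> i = length (snd h)" for i
    by (auto simp: ext_run_def)
  then show ?thesis
    unfolding IndNZn_fin_def counts_next_def
    using count_eq nz_step_ext_run[of _ h NZ \<alpha> q'] nz_step_ext_run_length[of NZ h \<alpha> q']
    by (auto simp: less_imp_le)
qed

lemma length_notin_IndNZn_fin: "length (snd h) \<notin> IndNZn_fin NZ n h"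
  by (simp add: IndNZn_fin_def)

lemma finite_IndNZn_fin: "finite (IndNZn_fin NZ n h)"
  by (simp add: IndNZn_fin_def)

lemma c_n_fin_ext_run:
  "c_n_fin NZ n (ext_run h \<alpha> q') = c_n_fin NZ n h + (if counts_next NZ n h \<alpha> then 1 else 0)"
  by (simp add: c_n_fin_def IndNZn_fin_ext_run finite_IndNZn_fin length_notin_IndNZn_fin)

lemma s_n_fin_ext_run:
  "s_n_fin NZ v n (ext_run h \<alpha> q') =
     s_n_fin NZ v n h + (if counts_next NZ n h \<alpha> then v (ext_run h \<alpha> q') else 0)"
proof -
  have "(\<Sum>i\<in>IndNZn_fin NZ n h. v (fst h, take (Suc i) (snd h @ [(\<alpha>, q')]))) = s_n_fin NZ v n h"
    unfolding s_n_fin_def by (rule sum.cong) (auto simp: IndNZn_fin_def)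
  then show ?thesis
    unfolding s_n_fin_def[of _ _ _ "ext_run h \<alpha> q'"] IndNZn_fin_ext_run
    by (simp add: finite_IndNZn_fin length_notin_IndNZn_fin ext_run_def)
qed

lemma cyl_prob_ext_run:
  "cyl_prob \<delta> \<sigma> q (ext_run h \<alpha> q') =
     cyl_prob \<delta> \<sigma> q h * pmf (\<sigma> h) \<alpha> * pmf (\<delta> (last_st h) \<alpha>) q'"
proof -
  obtain q0 xs where h: "h = (q0, xs)" by fastforce
  have "(\<Prod>i<length xs. pmf (\<sigma> (q0, take i (xs @ [(\<alpha>, q')]))) (fst ((xs @ [(\<alpha>, q')]) ! i)) *
          pmf (\<delta> (last_st (q0, take i (xs @ [(\<alpha>, q')])))
            (fst ((xs @ [(\<alpha>, q')]) ! i))) (snd ((xs @ [(\<alpha>, q')]) ! i)))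
      = (\<Prod>i<length xs. pmf (\<sigma> (q0, take i xs)) (fst (xs ! i)) *
          pmf (\<delta> (last_st (q0, take i xs)) (fst (xs ! i))) (snd (xs ! i)))"
    by (rule prod.cong) (auto simp: nth_append)
  then show ?thesis
    unfolding h cyl_prob_def ext_run_def by (simp add: algebra_simps)
qed

lemma cyl_prob_nonneg: "cyl_prob \<delta> \<sigma> q h \<ge> 0"
  unfolding cyl_prob_def by (auto intro!: prod_nonneg)

lemma cyl_prob_Nil: "cyl_prob \<delta> \<sigma> q (q0, []) = (if q0 = q then 1 else 0)"
  by (simp add: cyl_prob_def)

lemma hoeffding_lemma_pmf:
  fixes p :: "'b::finite pmf" and x :: "'b \<Rightarrow> real"
  assumes bounds: "\<And>y. a \<le> x y \<and> x y \<le> b"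
    and mean: "(\<Sum>y\<in>UNIV. pmf p y * x y) \<le> \<eta>" and "l > 0"
  shows "(\<Sum>y\<in>UNIV. pmf p y * exp (l * (x y - \<eta>))) \<le> exp (l\<^sup>2 * (b - a)\<^sup>2 / 8)"
proof -
  interpret interval_bounded_random_variable "measure_pmf p" x a b
    by unfold_locales (use bounds in auto)
  have expectation: "measure_pmf.expectation p x = (\<Sum>y\<in>UNIV. pmf p y * x y)"
    using integral_measure_pmf_real[of UNIV p x] by (simp add: mult.commute)
  have "ennreal (\<Sum>y\<in>UNIV. pmf p y * exp (l * (x y - measure_pmf.expectation p x)))
      = (\<integral>\<^sup>+y. exp (l * (x y - measure_pmf.expectation p x)) \<partial>measure_pmf p)"
    by (subst nn_integral_measure_pmf_support[where A = UNIV])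
      (auto simp: mult.commute sum_ennreal[symmetric] ennreal_mult)
  also have "\<dots> \<le> ennreal (exp (l\<^sup>2 * (b - a)\<^sup>2 / 8))"
    by (rule Hoeffdings_lemma_nn_integral[OF \<open>l > 0\<close>])
  finally have centered:
    "(\<Sum>y\<in>UNIV. pmf p y * exp (l * (x y - measure_pmf.expectation p x))) \<le> exp (l\<^sup>2 * (b - a)\<^sup>2 / 8)"
    by (simp add: ennreal_le_iff2)
  have "exp (l * (x y - \<eta>)) \<le> exp (l * (x y - measure_pmf.expectation p x))" for y
    using \<open>l > 0\<close> mean expectation by (simp add: mult_left_mono)
  then have "(\<Sum>y\<in>UNIV. pmf p y * exp (l * (x y - \<eta>)))
      \<le> (\<Sum>y\<in>UNIV. pmf p y * exp (l * (x y - measure_pmf.expectation p x)))"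
    by (intro sum_mono mult_left_mono) auto
  with centered show ?thesis by linarith
qed

lemma lists_length_Suc_eq_snoc:
  "{xs :: 'b list. length xs = Suc K} = (\<lambda>(xs, x). xs @ [x]) ` ({xs. length xs = K} \<times> UNIV)"
proof (intro set_eqI iffI)
  fix ys :: "'b list" assume "ys \<in> {xs. length xs = Suc K}"
  then have "ys = butlast ys @ [last ys]" "length (butlast ys) = K"
    by (auto intro: append_butlast_last_id[symmetric])
  then show "ys \<in> (\<lambda>(xs, x). xs @ [x]) ` ({xs. length xs = K} \<times> UNIV)"
    by (metis (mono_tags, lifting) SigmaI UNIV_I case_prod_conv image_eqI mem_Collect_eq)
qed auto

lemma sum_lists_length_le_Nil:
  fixes g :: "'b::finite list \<Rightarrow> real"
  assumes step: "\<And>xs. (\<Sum>x\<in>UNIV. g (xs @ [x])) \<le> g xs"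
  shows "(\<Sum>xs | length xs = K. g xs) \<le> g []"
proof (induction K)
  case 0
  then show ?case by simp
next
  case (Suc K)
  have "inj_on (\<lambda>(xs, x). xs @ [x]) ({xs. length xs = K} \<times> (UNIV :: 'b set))"
    by (auto simp: inj_on_def)
  then have "(\<Sum>xs | length xs = Suc K. g xs) = (\<Sum>xs | length xs = K. \<Sum>x\<in>UNIV. g (xs @ [x]))"
    unfolding lists_length_Suc_eq_snoc by (simp add: sum.reindex sum.cartesian_product case_prod_unfold)
  also have "\<dots> \<le> (\<Sum>xs | length xs = K. g xs)"
    by (intro sum_mono step)
  finally show ?case using Suc by linarith
qed

definition chernoff_weight ::
    "('q \<times> 'a) set \<Rightarrow> (('q,'a) frun \<Rightarrow> real) \<Rightarrow> nat \<Rightarrow> real \<Rightarrow> real \<Rightarrow> real \<Rightarrow> ('q,'a) frun \<Rightarrow> real" where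
  "chernoff_weight NZ v n \<eta> l \<kappa> h =
     exp (l * (s_n_fin NZ v n h - \<eta> * c_n_fin NZ n h) - \<kappa> * c_n_fin NZ n h)"

lemma chernoff_weight_ext_run:
  "chernoff_weight NZ v n \<eta> l \<kappa> (ext_run h \<alpha> q') = chernoff_weight NZ v n \<eta> l \<kappa> h *
     (if counts_next NZ n h \<alpha> then exp (l * (v (ext_run h \<alpha> q') - \<eta>) - \<kappa>) else 1)"
  unfolding chernoff_weight_def s_n_fin_ext_run c_n_fin_ext_run
  by (auto simp: exp_add[symmetric] algebra_simps)

lemma chernoff_weight_Nil: "chernoff_weight NZ v n \<eta> l \<kappa> (q0, []) = 1"
  by (simp add: chernoff_weight_def s_n_fin_def c_n_fin_def IndNZn_fin_def)

lemma chernoff_weight_supermartingale: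
  fixes \<delta> :: "'q::finite \<Rightarrow> 'a::finite \<Rightarrow> 'q pmf"
  assumes "is_valuation a b v" and "eta_bounded \<delta> \<eta> NZ v"
    and "l > 0" and "l\<^sup>2 * (b - a)\<^sup>2 / 8 \<le> \<kappa>"
  shows "(\<Sum>(\<alpha>, q')\<in>UNIV. cyl_prob \<delta> \<sigma> q (ext_run h \<alpha> q') * chernoff_weight NZ v n \<eta> l \<kappa> (ext_run h \<alpha> q'))
     \<le> cyl_prob \<delta> \<sigma> q h * chernoff_weight NZ v n \<eta> l \<kappa> h"
proof -
  define F where "F \<alpha> q' =
    (if counts_next NZ n h \<alpha> then exp (l * (v (ext_run h \<alpha> q') - \<eta>) - \<kappa>) else 1)" for \<alpha> q'
  define P where "P = cyl_prob \<delta> \<sigma> q h * chernoff_weight NZ v n \<eta> l \<kappa> h"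
  have "P \<ge> 0"
    unfolding P_def chernoff_weight_def by (simp add: cyl_prob_nonneg)
  have conditional_mean_F: "(\<Sum>q'\<in>UNIV. pmf (\<delta> (last_st h) \<alpha>) q' * F \<alpha> q') \<le> 1" for \<alpha>
  proof (cases "counts_next NZ n h \<alpha>")
    case True
    then have "(\<Sum>q'\<in>UNIV. pmf (\<delta> (last_st h) \<alpha>) q' * v (ext_run h \<alpha> q')) \<le> \<eta>"
      using \<open>eta_bounded \<delta> \<eta> NZ v\<close> unfolding eta_bounded_def counts_next_def by blast
    moreover have "a \<le> v (ext_run h \<alpha> q') \<and> v (ext_run h \<alpha> q') \<le> b" for q'
      using \<open>is_valuation a b v\<close> unfolding is_valuation_def by blast
    ultimately have "(\<Sum>q'\<in>UNIV. pmf (\<delta> (last_st h) \<alpha>) q' * exp (l * (v (ext_run h \<alpha> q') - \<eta>)))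
        \<le> exp \<kappa>"
      using hoeffding_lemma_pmf[of a "\<lambda>q'. v (ext_run h \<alpha> q')" b] \<open>l > 0\<close> assms(4)
      by (meson exp_le_cancel_iff order_trans)
    then show ?thesis
      using True by (simp add: F_def exp_diff sum_divide_distrib[symmetric])
  qed (simp add: F_def sum_pmf_eq_1)
  have "(\<Sum>(\<alpha>, q')\<in>UNIV. cyl_prob \<delta> \<sigma> q (ext_run h \<alpha> q') * chernoff_weight NZ v n \<eta> l \<kappa> (ext_run h \<alpha> q'))
      = P * (\<Sum>\<alpha>\<in>UNIV. pmf (\<sigma> h) \<alpha> * (\<Sum>q'\<in>UNIV. pmf (\<delta> (last_st h) \<alpha>) q' * F \<alpha> q'))"
    by (simp add: UNIV_Times_UNIV[symmetric] sum.cartesian_product[symmetric] sum_distrib_left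
        cyl_prob_ext_run chernoff_weight_ext_run F_def P_def mult_ac del: UNIV_Times_UNIV)
  also have "\<dots> \<le> P * (\<Sum>\<alpha>\<in>UNIV. pmf (\<sigma> h) \<alpha> * 1)"
    by (intro mult_left_mono sum_mono \<open>P \<ge> 0\<close> conditional_mean_F pmf_nonneg)
  finally show ?thesis
    by (simp add: P_def sum_pmf_eq_1)
qed

lemma frun_length_eq_Times: "{h :: ('q,'a) frun. length (snd h) = K} = UNIV \<times> {xs. length xs = K}"
  by auto

lemma finite_frun_length: "finite {h :: ('q::finite,'a::finite) frun. length (snd h) = K}"
  using finite_lists_length_eq[of "UNIV :: ('a \<times> 'q) set" K] by (simp add: frun_length_eq_Times)

lemma expected_chernoff_weight_le_1:
  fixes \<delta> :: "'q::finite \<Rightarrow> 'a::finite \<Rightarrow> 'q pmf"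
  assumes "is_valuation a b v" and "eta_bounded \<delta> \<eta> NZ v"
    and "l > 0" and "l\<^sup>2 * (b - a)\<^sup>2 / 8 \<le> \<kappa>"
  shows "(\<Sum>h | length (snd h) = K. cyl_prob \<delta> \<sigma> q h * chernoff_weight NZ v n \<eta> l \<kappa> h) \<le> 1"
proof -
  let ?g = "\<lambda>h. cyl_prob \<delta> \<sigma> q h * chernoff_weight NZ v n \<eta> l \<kappa> h"
  have "(\<Sum>h | length (snd h) = K. ?g h) = (\<Sum>q0\<in>UNIV. \<Sum>xs | length xs = K. ?g (q0, xs))"
    by (simp add: frun_length_eq_Times sum.cartesian_product)
  also have "\<dots> \<le> (\<Sum>q0\<in>UNIV. ?g (q0, []))"
  proof (intro sum_mono sum_lists_length_le_Nil)
    fix q0 xs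
    show "(\<Sum>x\<in>UNIV. ?g (q0, xs @ [x])) \<le> ?g (q0, xs)"
      using chernoff_weight_supermartingale[OF assms, of \<sigma> q "(q0, xs)" n]
      by (simp add: ext_run_def case_prod_unfold)
  qed
  also have "\<dots> = 1"
    by (simp add: cyl_prob_Nil chernoff_weight_Nil)
  finally show ?thesis .
qed

definition run_prefix :: "('q,'a) irun \<Rightarrow> nat \<Rightarrow> ('q,'a) frun" where
  "run_prefix \<rho> K = (fst (\<rho> 0), map (\<lambda>j. (snd (\<rho> j), fst (\<rho> (Suc j)))) [0..<K])"

lemma length_run_prefix [simp]: "length (snd (run_prefix \<rho> K)) = K"
  by (simp add: run_prefix_def)

lemma run_prefix_take:
  "i \<le> K \<Longrightarrow> (fst (run_prefix \<rho> K), take i (snd (run_prefix \<rho> K))) = run_prefix \<rho> i"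
  by (simp add: run_prefix_def take_map)

lemma last_st_run_prefix: "last_st (run_prefix \<rho> K) = fst (\<rho> K)"
  by (cases K) (simp_all add: last_st_def run_prefix_def)

lemma prefix_run_eq_run_prefix: "prefix_run \<rho> i = run_prefix \<rho> (Suc i)"
  by (simp add: prefix_run_def run_prefix_def)

lemma nz_step_run_prefix: "i < K \<Longrightarrow> nz_step NZ (run_prefix \<rho> K) i \<longleftrightarrow> \<rho> i \<in> NZ"
  by (simp add: nz_step_def run_prefix_take last_st_run_prefix) (simp add: run_prefix_def)

lemma IndNZn_fin_run_prefix: "IndNZn_fin NZ n (run_prefix \<rho> K) = IndNZn NZ n \<rho> \<inter> {..<K}"
proof -
  have "{j. j < i \<and> nz_step NZ (run_prefix \<rho> K) j} = {j \<in> IndNZ NZ \<rho>. j < i}" if "i < K" for i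
    using that nz_step_run_prefix[of _ K NZ \<rho>] by (auto simp: IndNZ_def)
  then show ?thesis
    by (auto simp: IndNZn_fin_def IndNZn_def nz_step_run_prefix IndNZ_def)
qed

lemma s_n_fin_run_prefix:
  "s_n_fin NZ v n (run_prefix \<rho> K) = (\<Sum>i\<in>IndNZn NZ n \<rho> \<inter> {..<K}. v (prefix_run \<rho> i))"
  unfolding s_n_fin_def IndNZn_fin_run_prefix
  by (rule sum.cong) (auto simp: run_prefix_take prefix_run_eq_run_prefix)

lemma mem_cyl_iff_run_prefix:
  assumes "length (snd h) = K"
  shows "\<rho> \<in> cyl h \<longleftrightarrow> run_prefix \<rho> K = h"
proof
  assume "\<rho> \<in> cyl h"
  then have "snd h = map (\<lambda>j. (snd (\<rho> j), fst (\<rho> (Suc j)))) [0..<K]"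
    using assms by (intro nth_equalityI) (auto simp: cyl_def prod_eq_iff)
  with \<open>\<rho> \<in> cyl h\<close> show "run_prefix \<rho> K = h"
    by (simp add: cyl_def run_prefix_def prod_eq_iff)
next
  assume "run_prefix \<rho> K = h"
  then show "\<rho> \<in> cyl h"
    using assms by (auto simp: cyl_def run_prefix_def)
qed

lemma Collect_run_prefix_eq_UN_cyl:
  "{\<rho>. P (run_prefix \<rho> K)} = (\<Union>h \<in> {h. length (snd h) = K \<and> P h}. cyl h)"
proof (intro set_eqI iffI)
  fix \<rho> assume "\<rho> \<in> {\<rho>. P (run_prefix \<rho> K)}"
  then show "\<rho> \<in> (\<Union>h \<in> {h. length (snd h) = K \<and> P h}. cyl h)"
    using mem_cyl_iff_run_prefix[of "run_prefix \<rho> K" K \<rho>] by (intro UN_I[of "run_prefix \<rho> K"]) auto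
next
  fix \<rho> assume "\<rho> \<in> (\<Union>h \<in> {h. length (snd h) = K \<and> P h}. cyl h)"
  then obtain h where "length (snd h) = K" "P h" "\<rho> \<in> cyl h"
    by blast
  then show "\<rho> \<in> {\<rho>. P (run_prefix \<rho> K)}"
    using mem_cyl_iff_run_prefix[of h K \<rho>] by simp
qed

lemma measurable_pred_component_count_space [measurable]:
  assumes "i \<in> I"
  shows "Measurable.pred (PiM I (\<lambda>_. count_space UNIV)) (\<lambda>\<rho>. P (\<rho> i))"
  using measurable_compose[OF measurable_component_singleton[OF assms] measurable_count_space, of P]
  by (simp add: pred_def)

lemma sets_cyl: "cyl h \<in> sets (runs_space :: ('q,'a) irun measure)"
proof -
  have "cyl h = {\<rho> \<in> space (runs_space :: ('q,'a) irun measure). fst (\<rho> 0) = fst h \<and>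
     (\<forall>i \<in> {..< length (snd h)}. snd (\<rho> i) = fst (snd h ! i) \<and> fst (\<rho> (Suc i)) = snd (snd h ! i))}"
    unfolding cyl_def by (auto simp: space_PiM)
  also have "\<dots> \<in> sets runs_space"
    by measurable
  finally show ?thesis .
qed

definition large_deviation ::
    "('q \<times> 'a) set \<Rightarrow> (('q,'a) frun \<Rightarrow> real) \<Rightarrow> nat \<Rightarrow> real \<Rightarrow> real \<Rightarrow> ('q,'a) frun \<Rightarrow> bool" where
  "large_deviation NZ v n \<eta> t h \<longleftrightarrow> c_n_fin NZ n h = n \<and> real n * \<eta> + t \<le> s_n_fin NZ v n h"

lemma large_deviation_run_prefix_Suc:
  assumes "large_deviation NZ v n \<eta> t (run_prefix \<rho> K)"
  shows "large_deviation NZ v n \<eta> t (run_prefix \<rho> (Suc K))"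
proof -
  \<comment> \<open>once n NZ-steps have been counted, no later step is counted\<close>
  have "K \<notin> IndNZn NZ n \<rho>"
  proof
    assume "K \<in> IndNZn NZ n \<rho>"
    then have "card {j \<in> IndNZ NZ \<rho>. j < K} < n"
      by (simp add: IndNZn_def)
    moreover have "card (IndNZn NZ n \<rho> \<inter> {..<K}) \<le> card {j \<in> IndNZ NZ \<rho>. j < K}"
      by (intro card_mono) (auto simp: IndNZn_def)
    ultimately show False
      using assms by (simp add: large_deviation_def c_n_fin_def IndNZn_fin_run_prefix)
  qed
  then have "IndNZn NZ n \<rho> \<inter> {..<Suc K} = IndNZn NZ n \<rho> \<inter> {..<K}"
    by (auto simp: less_Suc_eq)
  then show ?thesis
    using assms by (simp add: large_deviation_def c_n_fin_def IndNZn_fin_run_prefix s_n_fin_run_prefix)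
qed

lemma event_subset_UN_large_deviation_run_prefix:
  assumes "n \<ge> 1"
  shows "{\<rho>. s_n NZ v n \<rho> \<ge> real n * \<eta> + t} \<inter> {\<rho>. c_n NZ n \<rho> = n}
    \<subseteq> (\<Union>K. {\<rho>. large_deviation NZ v n \<eta> t (run_prefix \<rho> K)})"
proof
  fix \<rho> assume "\<rho> \<in> {\<rho>. s_n NZ v n \<rho> \<ge> real n * \<eta> + t} \<inter> {\<rho>. c_n NZ n \<rho> = n}"
  then have s: "s_n NZ v n \<rho> \<ge> real n * \<eta> + t" and c: "card (IndNZn NZ n \<rho>) = n"
    by (auto simp: c_n_def)
  then have "finite (IndNZn NZ n \<rho>)"
    using assms card.infinite by force
  then obtain K where "IndNZn NZ n \<rho> \<subseteq> {..<K}"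
    using finite_nat_bounded by blast
  then have "IndNZn NZ n \<rho> \<inter> {..<K} = IndNZn NZ n \<rho>"
    by auto
  then have "large_deviation NZ v n \<eta> t (run_prefix \<rho> K)"
    using s c by (simp add: large_deviation_def c_n_fin_def IndNZn_fin_run_prefix s_n_fin_run_prefix s_n_def)
  then show "\<rho> \<in> (\<Union>K. {\<rho>. large_deviation NZ v n \<eta> t (run_prefix \<rho> K)})"
    by blast
qed

lemma measure_large_deviation_run_prefix_le:
  fixes \<delta> :: "'q::finite \<Rightarrow> 'a::finite \<Rightarrow> 'q pmf"
  assumes "is_run_measure \<delta> \<sigma> q M" and "is_valuation a b v" and "eta_bounded \<delta> \<eta> NZ v"
    and "l > 0" and "l\<^sup>2 * (b - a)\<^sup>2 / 8 \<le> \<kappa>"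
  shows "measure M {\<rho>. large_deviation NZ v n \<eta> t (run_prefix \<rho> K)} \<le> exp (- (l * t - \<kappa> * n))"
proof -
  interpret prob_space M
    using assms(1) by (simp add: is_run_measure_def)
  have sets_M: "sets M = sets runs_space"
    using assms(1) by (simp add: is_run_measure_def)
  have measure_cyl: "measure M (cyl h) = cyl_prob \<delta> \<sigma> q h" for h
    using assms(1) unfolding is_run_measure_def by blast
  define G where "G = {h. length (snd h) = K \<and> large_deviation NZ v n \<eta> t h}"
  define \<theta> where "\<theta> = exp (l * t - \<kappa> * n)"
  let ?P = "cyl_prob \<delta> \<sigma> q" and ?W = "chernoff_weight NZ v n \<eta> l \<kappa>"
  have "finite G"
    unfolding G_def by (rule finite_subset[OF _ finite_frun_length[of K]]) auto
  have "\<theta> \<le> ?W h" if "h \<in> G" for h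
  proof -
    have "l * t \<le> l * (s_n_fin NZ v n h - \<eta> * n)"
      using that \<open>l > 0\<close> by (intro mult_left_mono) (auto simp: G_def large_deviation_def algebra_simps)
    then show ?thesis
      using that by (simp add: G_def large_deviation_def chernoff_weight_def \<theta>_def)
  qed
  then have markov: "?P h \<le> ?P h * ?W h / \<theta>" if "h \<in> G" for h
    using that cyl_prob_nonneg[of \<delta> \<sigma> q h] by (simp add: \<theta>_def field_simps mult_left_mono)
  have "measure M {\<rho>. large_deviation NZ v n \<eta> t (run_prefix \<rho> K)} \<le> (\<Sum>h\<in>G. measure M (cyl h))"
    unfolding Collect_run_prefix_eq_UN_cyl G_def[symmetric]
    using \<open>finite G\<close> by (intro finite_measure_subadditive_finite) (auto simp: sets_M sets_cyl)
  also have "\<dots> \<le> (\<Sum>h\<in>G. ?P h * ?W h / \<theta>)"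
    unfolding measure_cyl by (intro sum_mono markov)
  also have "\<dots> \<le> (\<Sum>h | length (snd h) = K. ?P h * ?W h / \<theta>)"
    by (intro sum_mono2 finite_frun_length)
      (auto simp: G_def \<theta>_def chernoff_weight_def cyl_prob_nonneg)
  also have "\<dots> \<le> 1 / \<theta>"
    unfolding sum_divide_distrib[symmetric] \<theta>_def
    by (intro divide_right_mono expected_chernoff_weight_le_1[OF assms(2-5)]) simp
  also have "\<dots> = exp (- (l * t - \<kappa> * n))"
    unfolding \<theta>_def exp_minus by (simp add: inverse_eq_divide)
  finally show ?thesis .
qed

lemma chernoff_bound:
  fixes \<delta> :: "'q::finite \<Rightarrow> 'a::finite \<Rightarrow> 'q pmf"
  assumes "is_run_measure \<delta> \<sigma> q M" and "is_valuation a b v" and "eta_bounded \<delta> \<eta> NZ v"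
    and "l > 0" and "l\<^sup>2 * (b - a)\<^sup>2 / 8 \<le> \<kappa>" and "n \<ge> 1"
  shows "measure M ({\<rho>. s_n NZ v n \<rho> \<ge> real n * \<eta> + t} \<inter> {\<rho>. c_n NZ n \<rho> = n})
    \<le> exp (- (l * t - \<kappa> * n))"
proof -
  interpret prob_space M
    using assms(1) by (simp add: is_run_measure_def)
  have sets_M: "sets M = sets runs_space"
    using assms(1) by (simp add: is_run_measure_def)
  define B where "B K = {\<rho>. large_deviation NZ v n \<eta> t (run_prefix \<rho> K)}" for K
  have sets_B: "B K \<in> sets M" for K
  proof -
    have "finite {h. length (snd h) = K \<and> large_deviation NZ v n \<eta> t h}"
      by (rule finite_subset[OF _ finite_frun_length[of K]]) auto
    then show ?thesis
      unfolding B_def Collect_run_prefix_eq_UN_cyl sets_M by (intro sets.finite_UN sets_cyl) auto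
  qed
  have "incseq B"
    unfolding B_def by (intro incseq_SucI) (auto intro: large_deviation_run_prefix_Suc)
  then have "(\<lambda>K. measure M (B K)) \<longlonglongrightarrow> measure M (\<Union>K. B K)"
    using sets_B by (intro finite_Lim_measure_incseq) auto
  moreover have "measure M (B K) \<le> exp (- (l * t - \<kappa> * n))" for K
    unfolding B_def by (rule measure_large_deviation_run_prefix_le[OF assms(1-5)])
  ultimately have union_le: "measure M (\<Union>K. B K) \<le> exp (- (l * t - \<kappa> * n))"
    using LIMSEQ_le_const2 by blast
  let ?E = "{\<rho>. s_n NZ v n \<rho> \<ge> real n * \<eta> + t} \<inter> {\<rho>. c_n NZ n \<rho> = n}"
  show ?thesis
  proof (cases "?E \<in> sets M")
    case True
    have "?E \<subseteq> (\<Union>K. B K)"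
      unfolding B_def by (rule event_subset_UN_large_deviation_run_prefix[OF \<open>n \<ge> 1\<close>])
    then have "measure M ?E \<le> measure M (\<Union>K. B K)"
      using sets_B by (intro finite_measure_mono) auto
    with union_le show ?thesis
      by linarith
  qed (simp add: measure_notin_sets)
qed

theorem mainTheorem12:
  fixes \<delta> :: "'q::finite \<Rightarrow> 'a::finite \<Rightarrow> 'q pmf"
    and q :: 'q and a b \<eta> t :: real and n :: nat
    and v :: "('q,'a) frun \<Rightarrow> real" and NZ :: "('q \<times> 'a) set"
    and \<sigma> :: "('q,'a) frun \<Rightarrow> 'a pmf" and M :: "('q,'a) irun measure"
  assumes "a < 0" and "0 < b" and "a \<le> \<eta>" and "\<eta> \<le> 0"
    and "is_valuation a b v"
    and "eta_bounded \<delta> \<eta> NZ v"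
    and "n \<ge> 1" and "t > 0"
    and "is_run_measure \<delta> \<sigma> q M"
  shows "measure M ({\<rho>. s_n NZ v n \<rho> \<ge> real n * \<eta> + t} \<inter> {\<rho>. c_n NZ n \<rho> = n})
           \<le> exp (- (2 * t\<^sup>2) / (real n * (b - a)\<^sup>2))"
proof -
  \<comment> \<open>of the hypotheses on a, b and \<eta>, only a < b is needed\<close>
  define D where "D = (b - a)\<^sup>2"
  have "D > 0" and "real n > 0"
    using assms(1,2,7) by (simp_all add: D_def)
  define l where "l = 4 * t / (n * D)"
  have "l > 0"
    using \<open>D > 0\<close> \<open>real n > 0\<close> \<open>t > 0\<close> by (simp add: l_def)
  have exponent: "- (l * t - l\<^sup>2 * D / 8 * n) = - (2 * t\<^sup>2) / (n * D)"
    using \<open>D > 0\<close> \<open>real n > 0\<close> unfolding l_def by (simp add: field_simps power2_eq_square)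
  have "measure M ({\<rho>. s_n NZ v n \<rho> \<ge> real n * \<eta> + t} \<inter> {\<rho>. c_n NZ n \<rho> = n})
      \<le> exp (- (l * t - l\<^sup>2 * D / 8 * n))"
    by (rule chernoff_bound[OF assms(9,5,6) \<open>l > 0\<close> _ assms(7)]) (simp add: D_def)
  also have "\<dots> = exp (- (2 * t\<^sup>2) / (real n * (b - a)\<^sup>2))"
    unfolding exponent unfolding D_def ..
  finally show ?thesis .
qed

end
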